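(* Let $K$ be a quadratic number field with ring of integers $\mathcal{O}_K$. There exists $X\in\mathcal{O}_K$ such that every element of $\mathcal{O}_K$ can be written uniquely as a finite sum $\sum_j\alpha_jX^j$ with $\alpha_j\in\{0,1\}$ (i.e. $X$ is an $\mathbb{S}$-generator of $\mathcal{O}_K$) if and only if $K$ is one of the following, and in each case the indicated element is such a generator: $\mathbb{Q}(\sqrt{-1})$ with $X=-1+\sqrt{-1}$ of $\mathcal{O}_K=\mathbb{Z}[\sqrt{-1}]$; $\mathbb{Q}(\sqrt{-2})$ with $X=\sqrt{-2}$ of $\mathcal{O}_K=\mathbb{Z}[\sqrt{-2}]$; $\mathbb{Q}(\sqrt{-7})$ with $X=\frac12(1+\sqrt{-7})$.
   Context: An $\mathbb{S}$-generator (i.e. $\mathbb{S}[\mu_{1,+}]$-generator, $\mu_1=\{1\}$) of a ring $A$ is an element $X\in A$ such that every element of $A$ is uniquely a finite sum of distinct powers $X^j$, $j\ge0$ (coefficients in $\{0,1\}$). *)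

theory Defs
  imports Complex_Main "HOL-Computational_Algebra.Polynomial" "HOL-Computational_Algebra.Squarefree"
begin

text \<open>The quadratic number field Q(sqrt d), d a squarefree integer different from 0 and 1,
  realised as a subfield of the complex numbers (for d < 0, csqrt d = i * sqrt |d|).
  Every quadratic number field is isomorphic to exactly one such field.\<close>
definition quad_field :: "int \<Rightarrow> complex set" where
  "quad_field d = {of_rat a + of_rat b * csqrt (of_int d) | a b. True}"

definition ring_of_integers :: "complex set \<Rightarrow> complex set" where
  "ring_of_integers K = {x \<in> K. algebraic_int x}"

definition S_generator :: "complex set \<Rightarrow> complex \<Rightarrow> bool" where
  "S_generator A X \<longleftrightarrow> X \<in> A \<and>
     (\<forall>y\<in>A. \<exists>!J::nat set. finite J \<and> y = (\<Sum>j\<in>J. X ^ j))"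

end

theory Submission
  imports Defs
begin

text \<open>The ring of integers of \<open>\<rat>(\<surd>d)\<close> consists of the numbers \<open>(m + k \<surd>d) / 2\<close> with
  \<open>m\<^sup>2 \<equiv> d k\<^sup>2 (mod 4)\<close>. If \<open>X\<close> is an \<open>\<bbbS>\<close>-generator, every element is congruent to \<open>0\<close> or \<open>1\<close>
  modulo \<open>X\<close>; writing \<open>2 = X z\<close> forces \<open>X\<close> to have norm \<open>\<plusminus>2\<close>, since norm \<open>\<plusminus>1\<close> would make \<open>X\<close> a
  unit and norm \<open>\<plusminus>4\<close> would make \<open>z\<close> a unit, leaving only two residues modulo \<open>2\<close>.
  For \<open>d > 0\<close> both real conjugates of \<open>X\<close> must be \<open>< -1\<close> (to represent \<open>-1\<close> and all large
  integers), which is incompatible with norm \<open>\<plusminus>2\<close> and an integral trace; for \<open>d < 0\<close> the equation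
  \<open>m\<^sup>2 - d k\<^sup>2 = 8\<close> leaves only \<open>d = -1, -2, -7\<close>. Conversely, for these \<open>d\<close> the given \<open>X\<close> has norm
  \<open>2\<close>, the expansion \<open>y = e + X y'\<close> with a digit \<open>e \<in> {0, 1}\<close> shrinks \<open>|y|\<close> as soon as \<open>|y|\<^sup>2 \<ge> 6\<close>, and the
  finitely many smaller elements are checked by computation; uniqueness holds because \<open>X\<close> is
  not a unit.\<close>

section \<open>Sums of distinct powers\<close>

lemma sum_powers_split:
  fixes X :: "'a::comm_semiring_1"
  assumes "finite J"
  shows "(\<Sum>j\<in>J. X ^ j) = (if 0 \<in> J then 1 else 0) + X * (\<Sum>j\<in>Suc -` J. X ^ j)"
proof -
  have J: "J = (J \<inter> {0}) \<union> Suc ` (Suc -` J)"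
    by (auto simp: image_iff) (metis not0_implies_Suc)
  have "(\<Sum>j\<in>J. X ^ j) = (\<Sum>j\<in>J \<inter> {0}. X ^ j) + (\<Sum>j\<in>Suc ` (Suc -` J). X ^ j)"
    using assms by (subst J, intro sum.union_disjoint) (auto intro: finite_vimageI)
  also have "(\<Sum>j\<in>Suc ` (Suc -` J). X ^ j) = (\<Sum>j\<in>Suc -` J. X ^ Suc j)"
    by (subst sum.reindex) auto
  also have "\<dots> = X * (\<Sum>j\<in>Suc -` J. X ^ j)"
    by (simp add: sum_distrib_left)
  finally show ?thesis
    by simp
qed

lemma sum_powers_add_digit:
  fixes X :: "'a::comm_semiring_1"
  assumes "e \<in> {0, 1}" and "finite J"
  shows "\<exists>J'. finite J' \<and> e + X * (\<Sum>j\<in>J. X ^ j) = (\<Sum>j\<in>J'. X ^ j)"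
proof -
  have shift: "X * (\<Sum>j\<in>J. X ^ j) = (\<Sum>j\<in>Suc ` J. X ^ j)"
    by (simp add: sum_distrib_left sum.reindex)
  consider "e = 0" | "e = 1"
    using assms(1) by blast
  then show ?thesis
  proof cases
    case 1
    then show ?thesis
      using shift assms(2) by (intro exI[of _ "Suc ` J"]) auto
  next
    case 2
    have "(\<Sum>j\<in>insert 0 (Suc ` J). X ^ j) = 1 + (\<Sum>j\<in>Suc ` J. X ^ j)"
      using assms(2) by (subst sum.insert) auto
    then show ?thesis
      using shift assms(2) 2 by (intro exI[of _ "insert 0 (Suc ` J)"]) auto
  qed
qed

lemma not_unit_if_norm_two:
  assumes "cmod X ^ 2 = 2" and "cmod z ^ 2 \<in> \<nat>"
  shows "X * z \<noteq> 1"
proof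
  assume "X * z = 1"
  obtain n where "cmod z ^ 2 = of_nat n"
    using assms(2) by (auto elim: Nats_cases)
  moreover have "cmod (X * z) ^ 2 = 1"
    using \<open>X * z = 1\<close> by simp
  ultimately have "real (2 * n) = real 1"
    by (simp add: norm_mult power_mult_distrib assms(1))
  then have "2 * n = 1"
    by (simp only: of_nat_eq_iff)
  then show False
    by presburger
qed

lemma sum_powers_expansion_by_descent:
  assumes norm_X: "cmod X ^ 2 = 2"
    and norm_Nats: "\<And>y. y \<in> A \<Longrightarrow> cmod y ^ 2 \<in> \<nat>"
    and digits: "\<And>y. y \<in> A \<Longrightarrow> \<exists>e\<in>{0, 1}. \<exists>y'\<in>A. y = e + X * y'"
    and small: "\<And>y. y \<in> A \<Longrightarrow> cmod y ^ 2 < 6 \<Longrightarrow> \<exists>J. finite J \<and> y = (\<Sum>j\<in>J. X ^ j)"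
    and "y \<in> A"
  shows "\<exists>J. finite J \<and> y = (\<Sum>j\<in>J. X ^ j)"
proof -
  obtain n where "cmod y ^ 2 = of_nat n"
    using norm_Nats[OF \<open>y \<in> A\<close>] by (auto elim: Nats_cases)
  with \<open>y \<in> A\<close> show ?thesis
  proof (induction n arbitrary: y rule: less_induct)
    case (less n)
    show ?case
    proof (cases "cmod y ^ 2 < 6")
      case True
      then show ?thesis
        using small less.prems(1) by blast
    next
      case False
      obtain e y' where e: "e \<in> {0, 1}" and "y' \<in> A" and y: "y = e + X * y'"
        using digits less.prems(1) by blast
      obtain n' where n': "cmod y' ^ 2 = real n'"
        using norm_Nats[OF \<open>y' \<in> A\<close>] by (auto elim: Nats_cases)
      have "2 * cmod y' ^ 2 = cmod (y - e) ^ 2"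
        using y by (simp add: norm_mult power_mult_distrib norm_X)
      also have "\<dots> \<le> (cmod y + 1) ^ 2"
        using norm_triangle_ineq4[of y e] e by (intro power_mono) auto
      also have "\<dots> < 2 * cmod y ^ 2"
        \<comment> \<open>\<open>2 |y|\<^sup>2 - (|y| + 1)\<^sup>2 = (3/5) |y|\<^sup>2 - 7/2 + (2/5) (|y| - 5/2)\<^sup>2 > 0\<close>\<close>
        using False zero_le_power2[of "cmod y - 5 / 2"] by (simp add: power2_eq_square algebra_simps)
      finally have "n' < n"
        using n' less.prems(2) by simp
      then obtain J where "finite J" "y' = (\<Sum>j\<in>J. X ^ j)"
        using less.IH \<open>y' \<in> A\<close> n' by blast
      then show ?thesis
        using sum_powers_add_digit[OF e, of J X] y by simp
    qed
  qed
qed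

locale complex_subring =
  fixes A :: "complex set"
  assumes one_mem: "1 \<in> A"
    and diff_mem: "x \<in> A \<Longrightarrow> y \<in> A \<Longrightarrow> x - y \<in> A"
    and mult_mem: "x \<in> A \<Longrightarrow> y \<in> A \<Longrightarrow> x * y \<in> A"
begin

lemma zero_mem: "0 \<in> A"
  using diff_mem[OF one_mem one_mem] by simp

lemma uminus_mem: "x \<in> A \<Longrightarrow> - x \<in> A"
  using diff_mem[OF zero_mem] by fastforce

lemma add_mem: "x \<in> A \<Longrightarrow> y \<in> A \<Longrightarrow> x + y \<in> A"
  using diff_mem[OF _ uminus_mem] by fastforce

lemma of_int_mem: "of_int c \<in> A"
proof -
  have of_nat: "of_nat n \<in> A" for n
    by (induction n) (simp_all add: zero_mem add_mem one_mem)
  have "of_int c = of_nat (nat c) - (of_nat (nat (- c)) :: complex)"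
    by (cases "c \<ge> 0") simp_all
  then show ?thesis
    using diff_mem[OF of_nat of_nat] by simp
qed

lemma sum_mem: "(\<And>j. j \<in> J \<Longrightarrow> f j \<in> A) \<Longrightarrow> sum f J \<in> A"
  by (induction J rule: infinite_finite_induct) (simp_all add: zero_mem add_mem)

lemma sum_powers_mem: "X \<in> A \<Longrightarrow> (\<Sum>j\<in>J. X ^ j) \<in> A"
proof (intro sum_mem)
  show "X \<in> A \<Longrightarrow> X ^ j \<in> A" for j
    by (induction j) (simp_all add: one_mem mult_mem)
qed

lemma S_generator_not_unit:
  assumes S: "S_generator A X" and "z \<in> A"
  shows "X * z \<noteq> 1"
proof
  assume "X * z = 1"
  obtain J where J: "finite J" "z = (\<Sum>j\<in>J. X ^ j)"
    using S \<open>z \<in> A\<close> unfolding S_generator_def by blast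
  have "(\<Sum>j\<in>Suc ` J. X ^ j) = X * z"
    by (simp add: J sum_distrib_left sum.reindex)
  also have "\<dots> = (\<Sum>j\<in>{0}. X ^ j)"
    using \<open>X * z = 1\<close> by simp
  finally have "finite (Suc ` J) \<and> 1 = (\<Sum>j\<in>Suc ` J. X ^ j)"
    using J(1) by simp
  moreover have "finite {0} \<and> 1 = (\<Sum>j\<in>{0}. X ^ j)"
    by simp
  moreover have "\<exists>!J. finite J \<and> 1 = (\<Sum>j\<in>J. X ^ j)"
    using S one_mem unfolding S_generator_def by blast
  ultimately have "Suc ` J = {0}"
    by blast
  then show False
    by auto
qed

lemma S_generator_digit:
  assumes S: "S_generator A X" and "y \<in> A"
  shows "\<exists>z\<in>A. y = X * z \<or> y = 1 + X * z"
proof -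
  obtain J where J: "finite J" "y = (\<Sum>j\<in>J. X ^ j)"
    using S \<open>y \<in> A\<close> unfolding S_generator_def by blast
  have "X \<in> A"
    using S unfolding S_generator_def by blast
  then have "(\<Sum>j\<in>Suc -` J. X ^ j) \<in> A"
    by (rule sum_powers_mem)
  then show ?thesis
    using sum_powers_split[OF J(1), of X] J(2) by (cases "0 \<in> J") auto
qed

lemma S_generator_mult_eq_two:
  assumes S: "S_generator A X"
  shows "\<exists>z\<in>A. X * z = 2"
proof -
  obtain z where "z \<in> A" and "2 = X * z \<or> 2 = 1 + X * z"
    using S_generator_digit[OF S, of 2] of_int_mem[of 2] by auto
  moreover have "X * z \<noteq> 1"
    using S_generator_not_unit[OF S \<open>z \<in> A\<close>] .
  ultimately show ?thesis
    by (metis add_left_cancel one_add_one)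
qed

lemma sum_powers_inj:
  assumes X: "X \<in> A" "X \<noteq> 0" and not_unit: "\<forall>z\<in>A. X * z \<noteq> 1"
    and "finite J" "finite K" and "(\<Sum>j\<in>J. X ^ j) = (\<Sum>j\<in>K. X ^ j)"
  shows "J = K"
proof -
  obtain B where "J \<union> K \<subseteq> {..<B}"
    using \<open>finite J\<close> \<open>finite K\<close> finite_nat_iff_bounded[of "J \<union> K"] by auto
  then show ?thesis
    using \<open>(\<Sum>j\<in>J. X ^ j) = (\<Sum>j\<in>K. X ^ j)\<close>
  proof (induction B arbitrary: J K)
    case 0
    then show ?case
      by simp
  next
    case (Suc B)
    have fin: "finite J" "finite K"
      using Suc.prems(1) finite_subset by blast+
    define J' K' where "J' = Suc -` J" and "K' = Suc -` K"
    have sums: "(\<Sum>j\<in>J. X ^ j) = (if 0 \<in> J then 1 else 0) + X * (\<Sum>j\<in>J'. X ^ j)"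
      "(\<Sum>j\<in>K. X ^ j) = (if 0 \<in> K then 1 else 0) + X * (\<Sum>j\<in>K'. X ^ j)"
      unfolding J'_def K'_def using fin by (simp_all add: sum_powers_split)
    have diff: "(\<Sum>j\<in>J'. X ^ j) - (\<Sum>j\<in>K'. X ^ j) \<in> A" "(\<Sum>j\<in>K'. X ^ j) - (\<Sum>j\<in>J'. X ^ j) \<in> A"
      using X(1) by (simp_all add: diff_mem sum_powers_mem)
    have zero: "0 \<in> J \<longleftrightarrow> 0 \<in> K"
    proof (rule ccontr)
      assume "(0 \<in> J) \<noteq> (0 \<in> K)"
      then have "X * ((\<Sum>j\<in>J'. X ^ j) - (\<Sum>j\<in>K'. X ^ j)) = 1 \<or>
          X * ((\<Sum>j\<in>K'. X ^ j) - (\<Sum>j\<in>J'. X ^ j)) = 1"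
        using Suc.prems(2) sums by (auto simp: algebra_simps)
      then show False
        using not_unit diff by blast
    qed
    then have "(\<Sum>j\<in>J'. X ^ j) = (\<Sum>j\<in>K'. X ^ j)"
      using Suc.prems(2) sums X(2) by simp
    moreover have "J' \<union> K' \<subseteq> {..<B}"
      using Suc.prems(1) by (auto simp: J'_def K'_def)
    ultimately have "J' = K'"
      using Suc.IH by blast
    show "J = K"
    proof (intro set_eqI)
      show "j \<in> J \<longleftrightarrow> j \<in> K" for j
        using zero \<open>J' = K'\<close> by (cases j) (auto simp: J'_def K'_def)
    qed
  qed
qed

lemma S_generatorI:
  assumes "X \<in> A" "X \<noteq> 0" and "\<forall>z\<in>A. X * z \<noteq> 1"
    and "\<forall>y\<in>A. \<exists>J. finite J \<and> y = (\<Sum>j\<in>J. X ^ j)"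
  shows "S_generator A X"
  unfolding S_generator_def
proof (intro conjI ballI ex_ex1I)
  show "X \<in> A"
    by fact
  show "\<exists>J. finite J \<and> y = (\<Sum>j\<in>J. X ^ j)" if "y \<in> A" for y
    using assms(4) that by blast
  show "J = K" if "finite J \<and> y = (\<Sum>j\<in>J. X ^ j)" "finite K \<and> y = (\<Sum>j\<in>K. X ^ j)" for y J K
    using sum_powers_inj[OF assms(1-3)] that by blast
qed


lemma S_generator_by_descent:
  assumes "X \<in> A" and "cmod X ^ 2 = 2"
    and "\<And>y. y \<in> A \<Longrightarrow> cmod y ^ 2 \<in> \<nat>"
    and "\<And>y. y \<in> A \<Longrightarrow> \<exists>e\<in>{0, 1}. \<exists>y'\<in>A. y = e + X * y'"
    and "\<And>y. y \<in> A \<Longrightarrow> cmod y ^ 2 < 6 \<Longrightarrow> \<exists>J. finite J \<and> y = (\<Sum>j\<in>J. X ^ j)"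
  shows "S_generator A X"
proof (rule S_generatorI)
  show "X \<noteq> 0"
    using assms(2) by auto
  show "\<forall>z\<in>A. X * z \<noteq> 1"
    using not_unit_if_norm_two assms(2,3) by blast
  show "\<forall>y\<in>A. \<exists>J. finite J \<and> y = (\<Sum>j\<in>J. X ^ j)"
    using sum_powers_expansion_by_descent[of X A] assms(2-5) by blast
qed (rule assms(1))

end

section \<open>Monic factors and quadratic minimal polynomials over the rationals\<close>

lemma map_poly_of_rat_add:
  "map_poly (of_rat :: rat \<Rightarrow> 'a::field_char_0) (p + q) = map_poly of_rat p + map_poly of_rat q"
  by (intro poly_eqI) (simp add: coeff_map_poly of_rat_add)

lemma map_poly_of_rat_mult:
  "map_poly (of_rat :: rat \<Rightarrow> 'a::field_char_0) (p * q) = map_poly of_rat p * map_poly of_rat q"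
  by (intro poly_eqI) (simp add: coeff_map_poly coeff_mult of_rat_sum of_rat_mult)

lemma map_poly_of_int_mult:
  "map_poly (of_int :: int \<Rightarrow> 'a::comm_ring_1) (p * q) = map_poly of_int p * map_poly of_int q"
  by (intro poly_eqI) (simp add: coeff_map_poly coeff_mult)

lemma map_poly_of_int_smult:
  "map_poly (of_int :: int \<Rightarrow> 'a::comm_ring_1) (smult c p) = smult (of_int c) (map_poly of_int p)"
  by (intro poly_eqI) (simp add: coeff_map_poly)

lemma map_poly_of_int_eq_iff:
  "map_poly (of_int :: int \<Rightarrow> 'a::ring_char_0) p = map_poly of_int q \<longleftrightarrow> p = q"
  by (metis coeff_map_poly of_int_0 of_int_eq_iff poly_eqI)

lemma rat_poly_clear_denominators:
  "\<exists>c::int. c > 0 \<and> (\<exists>Q. map_poly of_int Q = smult (of_int c) (q :: rat poly))"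
proof (induction q rule: pCons_induct)
  case 0
  show ?case by (intro exI[of _ 1]) (auto intro: exI[of _ 0])
next
  case (pCons a q)
  then obtain c Q where c: "c > 0" and Q: "map_poly of_int Q = smult (of_int c) q"
    by blast
  obtain u v where uv: "quotient_of a = (u, v)"
    by (cases "quotient_of a")
  have a: "a = of_int u / of_int v" and v: "v > 0"
    using quotient_of_div[OF uv] quotient_of_denom_pos[OF uv] .
  have "map_poly of_int (pCons (c * u) (smult v Q)) = smult (of_int (c * v)) (pCons a q)"
    using v by (simp add: map_poly_pCons map_poly_of_int_smult Q a mult_ac)
  then show ?case
    using c v by (intro exI[of _ "c * v"]) auto
qed

lemma content_monic_int_poly:
  fixes p :: "int poly"
  assumes "lead_coeff p = 1"
  shows "content p = 1"
  using content_dvd_coeff[of p "degree p"] assms normalize_content[of p] by simp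

lemma monic_factor_of_monic_int_poly:
  fixes p :: "int poly" and q s :: "rat poly"
  assumes eq: "map_poly of_int p = q * s" and p: "lead_coeff p = 1" and q: "lead_coeff q = 1"
  shows "coeff q i \<in> \<int>"
proof -
  have "lead_coeff (map_poly (of_int :: int \<Rightarrow> rat) p) = 1"
    using p by (subst lead_coeff_map_poly_nz) auto
  then have s: "lead_coeff s = 1"
    using q by (simp add: eq lead_coeff_mult)
  obtain c1 Q where c1: "c1 > 0" and Q: "map_poly of_int Q = smult (of_int c1) q"
    using rat_poly_clear_denominators by blast
  obtain c2 S where c2: "c2 > 0" and S: "map_poly of_int S = smult (of_int c2) s"
    using rat_poly_clear_denominators by blast
  have "map_poly (of_int :: int \<Rightarrow> rat) (Q * S) = map_poly of_int (smult (c1 * c2) p)"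
    by (simp add: map_poly_of_int_mult map_poly_of_int_smult Q S eq mult_ac)
  then have "Q * S = smult (c1 * c2) p"
    by (simp only: map_poly_of_int_eq_iff)
  then have "content Q * content S = content (smult (c1 * c2) p)"
    by (metis content_mult)
  also have "\<dots> = c1 * c2"
    using c1 c2 content_monic_int_poly[OF p] by simp
  finally have contents: "content Q * content S = c1 * c2" .
  have lead_Q: "coeff Q (degree q) = c1" and lead_S: "coeff S (degree s) = c2"
    using arg_cong[OF Q, of "\<lambda>p. coeff p (degree q)"] arg_cong[OF S, of "\<lambda>p. coeff p (degree s)"] q s
    by (simp_all add: coeff_map_poly)
  have "content Q \<le> c1" "content S \<le> c2"
    using content_dvd_coeff[of Q "degree q"] content_dvd_coeff[of S "degree s"] lead_Q lead_S c1 c2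
    by (simp_all add: zdvd_imp_le)
  moreover have "content Q \<ge> 0" "content S \<ge> 0"
    using normalize_content[of Q] normalize_content[of S] by (metis abs_ge_zero normalize_int_def)+
  ultimately have "content Q = c1"
    using contents c2 by (smt (verit, best) mult_left_mono mult_strict_right_mono)
  then obtain t where t: "coeff Q i = c1 * t"
    using content_dvd_coeff[of Q i] by (auto simp: dvd_def)
  have "of_int c1 * coeff q i = of_int c1 * (of_int t :: rat)"
    using arg_cong[OF Q, of "\<lambda>p. coeff p i"] by (auto simp: coeff_map_poly t)
  then show ?thesis
    using c1 by simp
qed

lemma quadratic_poly_root:
  fixes r :: "'a::field_char_0"
  assumes "r\<^sup>2 = of_rat c"
  shows "poly (map_poly of_rat [:a\<^sup>2 - c * b\<^sup>2, -2 * a, 1:]) (of_rat a + of_rat b * r) = 0"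
proof -
  have "poly (map_poly of_rat [:a\<^sup>2 - c * b\<^sup>2, -2 * a, 1:]) (of_rat a + of_rat b * r)
      = of_rat b ^ 2 * (r\<^sup>2 - of_rat c)"
    by (simp add: map_poly_pCons of_rat_add of_rat_mult of_rat_diff of_rat_minus of_rat_power
        power2_eq_square algebra_simps)
  then show ?thesis
    using assms by simp
qed

lemma quadratic_poly_dvd:
  fixes r :: "'a::field_char_0"
  assumes r: "r\<^sup>2 = of_rat c" "r \<notin> \<rat>" and "b \<noteq> 0"
    and root: "poly (map_poly of_rat P) (of_rat a + of_rat b * r) = 0"
  shows "[:a\<^sup>2 - c * b\<^sup>2, -2 * a, 1:] dvd P"
proof -
  define q where "q = [:a\<^sup>2 - c * b\<^sup>2, -2 * a, 1:]"
  define x where "x = of_rat a + of_rat b * r"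
  define R where "R = P mod q"
  have "P = q * (P div q) + R"
    by (simp add: R_def)
  then have "poly (map_poly of_rat P) x
      = poly (map_poly of_rat q) x * poly (map_poly of_rat (P div q)) x + poly (map_poly of_rat R) x"
    by (metis map_poly_of_rat_add map_poly_of_rat_mult poly_add poly_mult)
  then have root_R: "poly (map_poly of_rat R) x = 0"
    using root quadratic_poly_root[OF r(1)] by (simp add: x_def q_def)
  have "degree R < 2"
    using degree_mod_less[of q P] by (cases "R = 0") (auto simp: R_def q_def)
  then have R: "R = [:coeff R 0, coeff R 1:]"
    by (intro poly_eqI) (auto simp: coeff_pCons coeff_eq_0 split: nat.split)
  have "coeff R 1 = 0"
  proof (rule ccontr)
    assume nz: "coeff R 1 \<noteq> 0"
    have "of_rat (coeff R 0) + x * of_rat (coeff R 1) = 0"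
      using root_R by (subst (asm) R) (simp add: map_poly_pCons)
    then have "r = (- of_rat (coeff R 0) / of_rat (coeff R 1) - of_rat a) / of_rat b"
      using nz \<open>b \<noteq> 0\<close> by (simp add: x_def field_simps eq_neg_iff_add_eq_0)
    then show False
      using r(2) by simp
  qed
  moreover have "coeff R 0 = 0"
    using root_R calculation by (subst (asm) R) (simp add: map_poly_pCons)
  ultimately have "R = 0"
    using R by simp
  then show ?thesis
    by (simp add: R_def q_def mod_eq_0_iff_dvd)
qed

lemma quadratic_conjugate_root:
  fixes r :: "'a::field_char_0"
  assumes r: "r\<^sup>2 = of_rat c" "r \<notin> \<rat>"
    and root: "poly (map_poly of_rat P) (of_rat a + of_rat b * r) = 0"
  shows "poly (map_poly of_rat P) (of_rat a - of_rat b * r) = 0"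
proof (cases "b = 0")
  case False
  then obtain s where "P = [:a\<^sup>2 - c * (-b)\<^sup>2, -2 * a, 1:] * s"
    using quadratic_poly_dvd[OF r False root] by (auto simp: dvd_def)
  then have "poly (map_poly of_rat P) (of_rat a + of_rat (-b) * r)
      = poly (map_poly of_rat [:a\<^sup>2 - c * (-b)\<^sup>2, -2 * a, 1:]) (of_rat a + of_rat (-b) * r)
        * poly (map_poly of_rat s) (of_rat a + of_rat (-b) * r)"
    by (simp only: map_poly_of_rat_mult poly_mult)
  then have "poly (map_poly of_rat P) (of_rat a + of_rat (-b) * r) = 0"
    using quadratic_poly_root[OF r(1), of a "-b"] by simp
  then show ?thesis
    by (simp add: of_rat_minus)
qed (use root in simp)

section \<open>The ring of integers of a quadratic field\<close>

definition quad_half :: "int \<Rightarrow> int \<Rightarrow> int \<Rightarrow> complex" where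
  "quad_half d m k = (of_int m + of_int k * csqrt (of_int d)) / 2"

definition quad_ints :: "int \<Rightarrow> complex set" where
  "quad_ints d = {quad_half d m k | m k. 4 dvd m\<^sup>2 - d * k\<^sup>2}"

lemma quad_half_in_quad_ints [intro]: "4 dvd m\<^sup>2 - d * k\<^sup>2 \<Longrightarrow> quad_half d m k \<in> quad_ints d"
  unfolding quad_ints_def by blast

lemma quad_intsE:
  assumes "y \<in> quad_ints d"
  obtains m k where "y = quad_half d m k" and "4 dvd m\<^sup>2 - d * k\<^sup>2"
  using assms unfolding quad_ints_def by blast

lemma squarefree_imp_not_4_dvd:
  fixes d :: int
  assumes "squarefree d"
  shows "\<not> 4 dvd d"
  using squarefreeD[OF assms, of 2] by auto

lemma csqrt_of_int_not_rational:
  assumes "squarefree d" and "d \<noteq> 1"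
  shows "csqrt (of_int d) \<notin> \<rat>"
proof
  assume "csqrt (of_int d) \<in> \<rat>"
  then have "csqrt (of_int d) \<in> \<int>"
    by (intro rational_algebraic_int_is_int algebraic_int_csqrt) simp_all
  then obtain u where u: "csqrt (of_int d) = of_int u"
    by (elim Ints_cases)
  have "of_int (u\<^sup>2) = (of_int d :: complex)"
    using power2_csqrt[of "of_int d"] by (simp add: u)
  then have "u\<^sup>2 = d"
    by (simp only: of_int_eq_iff)
  then have "\<bar>u\<bar> = 1"
    using squarefreeD[OF assms(1), of u] by simp
  then show False
    using \<open>u\<^sup>2 = d\<close> assms(2) by (metis power2_abs one_power2)
qed

lemma squarefree_mult_square_Ints:
  fixes c :: rat
  assumes "squarefree d" and "of_int d * c\<^sup>2 \<in> \<int>"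
  shows "c \<in> \<int>"
proof -
  obtain u v where uv: "quotient_of c = (u, v)"
    by (cases "quotient_of c")
  have c: "c = of_int u / of_int v" and v: "v > 0" and "coprime u v"
    using quotient_of_div[OF uv] quotient_of_denom_pos[OF uv] quotient_of_coprime[OF uv] .
  obtain n where "of_int d * c\<^sup>2 = of_int n"
    using assms(2) by (elim Ints_cases)
  then have "of_int (d * u\<^sup>2) = (of_int (n * v\<^sup>2) :: rat)"
    using v by (simp add: c field_simps)
  then have "v\<^sup>2 dvd d * u\<^sup>2"
    by (simp only: of_int_eq_iff) simp
  moreover have "coprime (v\<^sup>2) (u\<^sup>2)"
    using \<open>coprime u v\<close> by (simp add: coprime_commute)
  ultimately have "v\<^sup>2 dvd d"
    by (simp add: coprime_dvd_mult_left_iff)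
  then have "v = 1"
    using squarefreeD[OF assms(1)] v by force
  then show ?thesis
    by (simp add: c)
qed

lemma quad_ints_subset_ring_of_integers: "quad_ints d \<subseteq> ring_of_integers (quad_field d)"
proof
  fix x
  assume "x \<in> quad_ints d"
  then obtain m k where x: "x = quad_half d m k" and "4 dvd m\<^sup>2 - d * k\<^sup>2"
    by (elim quad_intsE)
  then obtain n where n: "m\<^sup>2 - d * k\<^sup>2 = 4 * n"
    by (elim dvdE)
  have "x = of_rat (of_int m / 2) + of_rat (of_int k / 2) * csqrt (of_int d)"
    by (simp add: x quad_half_def of_rat_divide add_divide_distrib)
  then have "x \<in> quad_field d"
    unfolding quad_field_def by blast
  moreover have "algebraic_int x"
  proof (rule algebraic_int.intros[of "[:of_int n, - of_int m, 1:]"])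
    show "\<forall>i. coeff [:of_int n, - of_int m, 1:] i \<in> \<int>"
      by (auto simp: coeff_pCons split: nat.splits)
    have "4 * poly [:of_int n, - of_int m, 1:] x
        = 4 * of_int n - of_int m ^ 2 + of_int k ^ 2 * (csqrt (of_int d))\<^sup>2"
      by (simp add: x quad_half_def field_simps power2_eq_square)
    also have "\<dots> = 0"
      using arg_cong[OF n, of "of_int :: int \<Rightarrow> complex"] by (simp add: algebra_simps)
    finally show "poly [:of_int n, - of_int m, 1:] x = 0"
      by (simp only: mult_eq_0_iff) simp
  qed simp
  ultimately show "x \<in> ring_of_integers (quad_field d)"
    unfolding ring_of_integers_def by blast
qed

text \<open>For \<open>b \<noteq> 0\<close> the minimal polynomial \<open>X\<^sup>2 - 2 a X + (a\<^sup>2 - d b\<^sup>2)\<close> of \<open>a + b \<surd>d\<close> divides a monic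
  integer polynomial, so Gauss's lemma makes its coefficients integral.\<close>

lemma algebraic_int_quad_trace_norm:
  fixes a b :: rat
  assumes "squarefree d" and "d \<noteq> 1" and int: "algebraic_int (of_rat a + of_rat b * csqrt (of_int d))"
  shows "2 * a \<in> \<int> \<and> a\<^sup>2 - of_int d * b\<^sup>2 \<in> \<int>"
proof (cases "b = 0")
  case True
  then have "of_rat a \<in> (\<int> :: complex set)"
    using int by (intro rational_algebraic_int_is_int) simp_all
  then obtain c where "of_rat a = (of_rat (of_int c) :: complex)"
    by (auto elim: Ints_cases)
  then have "a = of_int c"
    by (simp only: of_rat_eq_iff)
  then show ?thesis
    using True by simp
next
  case False
  obtain p where p: "poly (map_poly of_int p) (of_rat a + of_rat b * csqrt (of_int d)) = 0"
    and "lead_coeff p = 1"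
    using int by (auto simp: algebraic_int_altdef_ipoly)
  then have "poly (map_poly of_rat (map_poly of_int p)) (of_rat a + of_rat b * csqrt (of_int d)) = 0"
    by (simp add: map_poly_map_poly o_def)
  then have "[:a\<^sup>2 - of_int d * b\<^sup>2, -2 * a, 1:] dvd map_poly of_int p"
    using False csqrt_of_int_not_rational[OF assms(1,2)]
    by (intro quadratic_poly_dvd[where c = "of_int d"]) simp_all
  then obtain s where "map_poly of_int p = [:a\<^sup>2 - of_int d * b\<^sup>2, -2 * a, 1:] * s"
    by (auto simp: dvd_def)
  then have coeffs: "coeff [:a\<^sup>2 - of_int d * b\<^sup>2, -2 * a, 1:] i \<in> \<int>" for i
    using \<open>lead_coeff p = 1\<close> by (intro monic_factor_of_monic_int_poly) simp_all
  have "- (2 * a) \<in> \<int>"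
    using coeffs[of 1] by simp
  then show ?thesis
    using coeffs[of 0] Ints_minus[of "- (2 * a)"] by simp
qed

lemma ring_of_integers_subset_quad_ints:
  assumes sf: "squarefree d" and "d \<noteq> 1"
  shows "ring_of_integers (quad_field d) \<subseteq> quad_ints d"
proof
  fix x
  assume "x \<in> ring_of_integers (quad_field d)"
  then obtain a b where x: "x = of_rat a + of_rat b * csqrt (of_int d)" and "algebraic_int x"
    unfolding ring_of_integers_def quad_field_def by blast
  then have "2 * a \<in> \<int>" and "a\<^sup>2 - of_int d * b\<^sup>2 \<in> \<int>"
    using algebraic_int_quad_trace_norm[OF assms, of a b] by simp_all
  then obtain m n where a: "2 * a = of_int m" and n: "a\<^sup>2 - of_int d * b\<^sup>2 = of_int n"
    by (elim Ints_cases) blast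
  have "of_int d * (2 * b)\<^sup>2 = (2 * a)\<^sup>2 - 4 * (a\<^sup>2 - of_int d * b\<^sup>2)"
    by (simp add: algebra_simps power2_eq_square)
  also have "\<dots> = of_int (m\<^sup>2 - 4 * n)"
    by (simp add: a n)
  finally have "of_int d * (2 * b)\<^sup>2 \<in> \<int>"
    by (metis Ints_of_int)
  then have "2 * b \<in> \<int>"
    by (rule squarefree_mult_square_Ints[OF sf])
  then obtain k where b: "2 * b = of_int k"
    by (elim Ints_cases)
  have "of_int (m\<^sup>2 - d * k\<^sup>2) = (of_int (4 * n) :: rat)"
    by (simp flip: a b n add: algebra_simps power2_eq_square)
  then have "4 dvd m\<^sup>2 - d * k\<^sup>2"
    by (simp only: of_int_eq_iff) simp
  moreover have "x = quad_half d m k"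
  proof -
    have a': "a = of_int m / 2" and b': "b = of_int k / 2"
      using a b by simp_all
    show ?thesis
      unfolding x quad_half_def a' b' by (simp add: of_rat_divide add_divide_distrib)
  qed
  ultimately show "x \<in> quad_ints d"
    by blast
qed

lemma ring_of_integers_quad_field:
  assumes "squarefree d" and "d \<noteq> 1"
  shows "ring_of_integers (quad_field d) = quad_ints d"
  using quad_ints_subset_ring_of_integers ring_of_integers_subset_quad_ints[OF assms] by blast

lemma quad_half_mult:
  "quad_half d m k * quad_half d m' k'
     = (of_int (m * m' + d * k * k') + of_int (m * k' + m' * k) * csqrt (of_int d)) / 4"
proof -
  define r where "r = csqrt (of_int d :: complex)"
  have r: "r * r = of_int d"
    using power2_csqrt[of "of_int d"] by (simp only: r_def power2_eq_square)
  have "quad_half d m k * quad_half d m' k'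
      = (of_int m * of_int m' + of_int k * of_int k' * (r * r)
         + (of_int m * of_int k' + of_int m' * of_int k) * r) / 4"
    by (simp add: quad_half_def r_def field_simps)
  also have "\<dots> = (of_int (m * m' + d * k * k') + of_int (m * k' + m' * k) * r) / 4"
    by (simp only: r) (simp add: algebra_simps)
  finally show ?thesis
    by (simp only: r_def)
qed

lemma quad_half_times_conj: "quad_half d m k * quad_half d m (-k) = of_int (m\<^sup>2 - d * k\<^sup>2) / 4"
  by (simp add: quad_half_mult power2_eq_square)

lemma quad_half_diff: "quad_half d m k - quad_half d m' k' = quad_half d (m - m') (k - k')"
  by (simp add: quad_half_def field_simps)

lemma of_int_eq_quad_half: "of_int c = quad_half d (2 * c) 0"
  by (simp add: quad_half_def)

lemma quad_half_eq_iff: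
  assumes "squarefree d" and "d \<noteq> 1"
  shows "quad_half d m k = quad_half d m' k' \<longleftrightarrow> m = m' \<and> k = k'"
proof
  assume eq: "quad_half d m k = quad_half d m' k'"
  have "k = k'"
  proof (rule ccontr)
    assume "k \<noteq> k'"
    have "of_int m + of_int k * csqrt (of_int d) = of_int m' + of_int k' * (csqrt (of_int d) :: complex)"
      using eq unfolding quad_half_def by (metis divide_cancel_right zero_neq_numeral)
    then have "(of_int k - of_int k') * csqrt (of_int d) = (of_int m' - of_int m :: complex)"
      by algebra
    then have "csqrt (of_int d) = (of_int m' - of_int m) / (of_int k - of_int k' :: complex)"
      using \<open>k \<noteq> k'\<close> by (simp add: field_simps)
    then show False
      using csqrt_of_int_not_rational[OF assms] by simp
  qed
  then show "m = m' \<and> k = k'"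
    using eq by (simp add: quad_half_def)
qed simp

lemma quad_half_in_quad_ints_iff:
  assumes "squarefree d" and "d \<noteq> 1"
  shows "quad_half d m k \<in> quad_ints d \<longleftrightarrow> 4 dvd m\<^sup>2 - d * k\<^sup>2"
  using quad_half_eq_iff[OF assms] by (auto elim!: quad_intsE)

lemma quad_ints_parity:
  fixes m k d :: int
  assumes "4 dvd m\<^sup>2 - d * k\<^sup>2"
  shows "even m \<longleftrightarrow> even d \<or> even k"
proof -
  have "even (m\<^sup>2 - d * k\<^sup>2)"
    using assms by (metis dvd_trans even_numeral)
  then show ?thesis
    by auto
qed

lemma quad_ints_mult:
  assumes "x \<in> quad_ints d" and "y \<in> quad_ints d"
  shows "x * y \<in> quad_ints d"
proof -
  obtain m k m' k' where x: "x = quad_half d m k" and y: "y = quad_half d m' k'"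
    and "4 dvd m\<^sup>2 - d * k\<^sup>2" and "4 dvd m'\<^sup>2 - d * k'\<^sup>2"
    using assms by (elim quad_intsE)
  then obtain n n' where n: "m\<^sup>2 - d * k\<^sup>2 = 4 * n" and n': "m'\<^sup>2 - d * k'\<^sup>2 = 4 * n'"
    by (elim dvdE)
  have "even m \<longleftrightarrow> even d \<or> even k" "even m' \<longleftrightarrow> even d \<or> even k'"
    using \<open>4 dvd m\<^sup>2 - d * k\<^sup>2\<close> \<open>4 dvd m'\<^sup>2 - d * k'\<^sup>2\<close> by (simp_all add: quad_ints_parity)
  then have "even (m * m' + d * k * k')" and "even (m * k' + m' * k)"
    by auto
  then obtain M K where M: "m * m' + d * k * k' = 2 * M" and K: "m * k' + m' * k = 2 * K"
    by (elim evenE)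
  have "4 * (M\<^sup>2 - d * K\<^sup>2) = (2 * M)\<^sup>2 - d * (2 * K)\<^sup>2"
    by (simp add: power2_eq_square algebra_simps)
  also have "\<dots> = (m * m' + d * k * k')\<^sup>2 - d * (m * k' + m' * k)\<^sup>2"
    by (simp only: M K)
  also have "\<dots> = (m\<^sup>2 - d * k\<^sup>2) * (m'\<^sup>2 - d * k'\<^sup>2)"
    by (simp add: power2_eq_square algebra_simps)
  finally have "4 * (M\<^sup>2 - d * K\<^sup>2) = 4 * (4 * (n * n'))"
    by (simp add: n n')
  then have "4 dvd M\<^sup>2 - d * K\<^sup>2"
    by (metis dvd_triv_left mult_cancel_left zero_neq_numeral)
  have "x * y = (of_int (2 * M) + of_int (2 * K) * csqrt (of_int d)) / 4"
    by (simp only: x y quad_half_mult M K)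
  also have "\<dots> = quad_half d M K"
    by (simp add: quad_half_def field_simps)
  finally show ?thesis
    using \<open>4 dvd M\<^sup>2 - d * K\<^sup>2\<close> by auto
qed

lemma quad_ints_diff:
  assumes "x \<in> quad_ints d" and "y \<in> quad_ints d"
  shows "x - y \<in> quad_ints d"
proof -
  obtain m k m' k' where x: "x = quad_half d m k" and y: "y = quad_half d m' k'"
    and "4 dvd m\<^sup>2 - d * k\<^sup>2" and "4 dvd m'\<^sup>2 - d * k'\<^sup>2"
    using assms by (elim quad_intsE)
  then obtain n n' where n: "m\<^sup>2 - d * k\<^sup>2 = 4 * n" and n': "m'\<^sup>2 - d * k'\<^sup>2 = 4 * n'"
    by (elim dvdE)
  have "even m \<longleftrightarrow> even d \<or> even k" "even m' \<longleftrightarrow> even d \<or> even k'"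
    using \<open>4 dvd m\<^sup>2 - d * k\<^sup>2\<close> \<open>4 dvd m'\<^sup>2 - d * k'\<^sup>2\<close> by (simp_all add: quad_ints_parity)
  then have "even (m * m' - d * k * k')"
    by auto
  then obtain M where M: "m * m' - d * k * k' = 2 * M"
    by (elim evenE)
  have "(m - m')\<^sup>2 - d * (k - k')\<^sup>2 = (m\<^sup>2 - d * k\<^sup>2) + (m'\<^sup>2 - d * k'\<^sup>2) - 2 * (m * m' - d * k * k')"
    by (simp add: power2_eq_square algebra_simps)
  also have "\<dots> = 4 * (n + n' - M)"
    by (simp add: n n' M)
  finally show ?thesis
    by (auto simp: x y quad_half_diff)
qed

interpretation quad_ints: complex_subring "quad_ints d" for d
proof
  have "quad_half d 2 0 \<in> quad_ints d"
    by (rule quad_half_in_quad_ints) simp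
  then show "1 \<in> quad_ints d"
    using of_int_eq_quad_half[of 1 d] by simp
qed (simp_all add: quad_ints_diff quad_ints_mult)

section \<open>Quadratic fields without an \<open>\<bbbS>\<close>-generator\<close>

lemma quad_ints_not_mod_two:
  assumes sf: "squarefree d" and "d \<noteq> 1"
  shows "\<not> (\<forall>y\<in>quad_ints d. \<exists>v\<in>quad_ints d. y = 2 * v \<or> y = 1 + 2 * v)"
proof
  assume mod_two: "\<forall>y\<in>quad_ints d. \<exists>v\<in>quad_ints d. y = 2 * v \<or> y = 1 + 2 * v"
  have halves: "\<exists>p q. 4 dvd p\<^sup>2 - d * q\<^sup>2 \<and> k = 2 * q \<and> (m = 2 * p \<or> m = 2 + 2 * p)"
    if mk: "4 dvd m\<^sup>2 - d * k\<^sup>2" for m k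
  proof -
    obtain v where "v \<in> quad_ints d" and v: "quad_half d m k = 2 * v \<or> quad_half d m k = 1 + 2 * v"
      using mod_two quad_half_in_quad_ints[OF mk] by blast
    then obtain p q where "v = quad_half d p q" and "4 dvd p\<^sup>2 - d * q\<^sup>2"
      by (elim quad_intsE)
    moreover have "2 * quad_half d p q = quad_half d (2 * p) (2 * q)"
      and "1 + 2 * quad_half d p q = quad_half d (2 + 2 * p) (2 * q)"
      by (simp_all add: quad_half_def field_simps)
    ultimately have "quad_half d m k = quad_half d (2 * p) (2 * q) \<or>
        quad_half d m k = quad_half d (2 + 2 * p) (2 * q)"
      using v by simp
    then show ?thesis
      using \<open>4 dvd p\<^sup>2 - d * q\<^sup>2\<close> by (auto simp: quad_half_eq_iff[OF assms])
  qed
  obtain p where "4 dvd p\<^sup>2 - d" and "p = 0 \<or> p = -1"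
    using halves[of 0 2] by auto
  then have "4 dvd 1 ^ 2 - d * 1 ^ 2"
    using squarefree_imp_not_4_dvd[OF sf] by auto
  then obtain q :: int where "1 = 2 * q"
    using halves by blast
  then show False
    by presburger
qed

lemma quad_half_unit:
  assumes "m\<^sup>2 - d * k\<^sup>2 = 4 * N" and "N * N = 1"
  shows "\<exists>w\<in>quad_ints d. quad_half d m k * w = 1"
proof
  show "of_int N * quad_half d m (- k) \<in> quad_ints d"
    using assms(1) by (intro quad_ints.mult_mem quad_ints.of_int_mem quad_half_in_quad_ints) simp
  have "quad_half d m k * quad_half d m (- k) = of_int N"
    using quad_half_times_conj[of d m k] by (simp add: assms(1))
  then have "quad_half d m k * (of_int N * quad_half d m (- k)) = of_int (N * N)"
    by (metis mult.left_commute of_int_mult)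
  also have "\<dots> = 1"
    using assms(2) by simp
  finally show "quad_half d m k * (of_int N * quad_half d m (- k)) = 1" .
qed

lemma int_mult_eq_4_cases:
  fixes N N' :: int
  assumes "N * N' = 4"
  shows "N * N = 1 \<or> N' * N' = 1 \<or> N = 2 \<or> N = -2"
proof -
  have "N dvd 4" "N' dvd 4"
    using assms dvd_triv_left[of N N'] dvd_triv_right[of N' N] by simp_all
  then have "\<bar>N\<bar> \<le> 4" "\<bar>N'\<bar> \<le> 4"
    using dvd_imp_le_int[of 4] by simp_all
  then have "N \<in> {-4, -3, -2, -1, 0, 1, 2, 3, 4}" "N' \<in> {-4, -3, -2, -1, 0, 1, 2, 3, 4}"
    by auto
  then show ?thesis
    using assms by auto
qed

lemma quad_half_mult_eq_two:
  assumes "squarefree d" and "d \<noteq> 1" and "quad_half d m k * quad_half d m' k' = 2"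
  shows "(m\<^sup>2 - d * k\<^sup>2) * (m'\<^sup>2 - d * k'\<^sup>2) = 64"
proof -
  have "quad_half d (m * m' + d * k * k') (m * k' + m' * k) = quad_half d 8 0"
    using assms(3) by (simp add: quad_half_mult) (simp add: quad_half_def)
  then have "m * m' + d * k * k' = 8" and "m * k' + m' * k = 0"
    using quad_half_eq_iff[OF assms(1,2)] by auto
  moreover have "(m\<^sup>2 - d * k\<^sup>2) * (m'\<^sup>2 - d * k'\<^sup>2)
      = (m * m' + d * k * k')\<^sup>2 - d * (m * k' + m' * k)\<^sup>2"
    by (simp add: power2_eq_square algebra_simps)
  ultimately show ?thesis
    by simp
qed

lemma S_generator_quad_ints_norm:
  assumes sf: "squarefree d" and "d \<noteq> 1"
    and S: "S_generator (quad_ints d) (quad_half d m k)"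
  shows "m\<^sup>2 - d * k\<^sup>2 = 8 \<or> m\<^sup>2 - d * k\<^sup>2 = -8"
proof -
  define X where "X = quad_half d m k"
  have "4 dvd m\<^sup>2 - d * k\<^sup>2"
    using S unfolding S_generator_def quad_half_in_quad_ints_iff[OF sf \<open>d \<noteq> 1\<close>] by blast
  then obtain N where N: "m\<^sup>2 - d * k\<^sup>2 = 4 * N"
    by (elim dvdE)
  obtain z where "z \<in> quad_ints d" and Xz: "X * z = 2"
    using quad_ints.S_generator_mult_eq_two S unfolding X_def by blast
  then obtain m' k' where z: "z = quad_half d m' k'" and "4 dvd m'\<^sup>2 - d * k'\<^sup>2"
    by (elim quad_intsE)
  then obtain N' where N': "m'\<^sup>2 - d * k'\<^sup>2 = 4 * N'"
    by (elim dvdE)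
  have "N * N' = 4"
    using quad_half_mult_eq_two[OF sf \<open>d \<noteq> 1\<close>, of m k m' k'] Xz by (simp add: X_def z N N' mult.commute)
  then consider "N * N = 1" | "N' * N' = 1" | "N = 2 \<or> N = -2"
    using int_mult_eq_4_cases by blast
  then show ?thesis
  proof cases
    case 1
    then obtain w where "w \<in> quad_ints d" and "X * w = 1"
      using quad_half_unit[OF N] unfolding X_def by blast
    then show ?thesis
      using quad_ints.S_generator_not_unit S unfolding X_def by blast
  next
    case 2
    then obtain u where "u \<in> quad_ints d" and "z * u = 1"
      using quad_half_unit[OF N'] z by blast
    then have "X = 2 * u"
      using Xz by (metis mult.assoc mult.right_neutral)
    then have "\<forall>y\<in>quad_ints d. \<exists>v\<in>quad_ints d. y = 2 * v \<or> y = 1 + 2 * v"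
      using quad_ints.S_generator_digit[OF S[folded X_def]] quad_ints.mult_mem[OF \<open>u \<in> quad_ints d\<close>]
      by (metis mult.assoc)
    then show ?thesis
      using quad_ints_not_mod_two[OF sf \<open>d \<noteq> 1\<close>] by blast
  next
    case 3
    then show ?thesis
      using N by auto
  qed
qed

lemma sum_powers_quad_half_conj:
  assumes "squarefree d" and "d \<noteq> 1"
    and "(\<Sum>j\<in>J. quad_half d m k ^ j) = of_int c"
  shows "(\<Sum>j\<in>J. quad_half d m (- k) ^ j) = of_int c"
proof -
  define r where "r = csqrt (of_int d :: complex)"
  define P where "P = (\<Sum>j\<in>J. monom (1::rat) j) - [:of_int c:]"
  have poly_P: "poly (map_poly of_rat P) x = (\<Sum>j\<in>J. x ^ j) - of_int c" for x :: complex
  proof -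
    have "map_poly (of_rat :: rat \<Rightarrow> complex) (\<Sum>j\<in>J. monom 1 j) = (\<Sum>j\<in>J. monom 1 j)"
      by (induction J rule: infinite_finite_induct) (simp_all add: map_poly_of_rat_add map_poly_monom)
    moreover have "map_poly (of_rat :: rat \<Rightarrow> complex) P = map_poly of_rat (\<Sum>j\<in>J. monom 1 j) - [:of_int c:]"
      by (intro poly_eqI) (simp add: P_def coeff_map_poly of_rat_diff coeff_pCons split: nat.split)
    ultimately show ?thesis
      by (simp add: poly_sum poly_monom)
  qed
  have halves: "quad_half d m k = of_rat (of_int m / 2) + of_rat (of_int k / 2) * r"
    "quad_half d m (- k) = of_rat (of_int m / 2) - of_rat (of_int k / 2) * r"
    by (simp_all add: quad_half_def r_def of_rat_divide add_divide_distrib diff_divide_distrib)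
  have "poly (map_poly of_rat P) (of_rat (of_int m / 2) + of_rat (of_int k / 2) * r) = 0"
    using assms(3) by (simp add: poly_P flip: halves(1))
  then have "poly (map_poly of_rat P) (of_rat (of_int m / 2) - of_rat (of_int k / 2) * r) = 0"
    using csqrt_of_int_not_rational[OF assms(1,2)]
    by (intro quadratic_conjugate_root[where c = "of_int d"]) (simp_all add: r_def)
  then show ?thesis
    by (simp add: poly_P flip: halves(2))
qed

lemma real_sum_powers_base:
  fixes t :: real
  assumes all: "\<forall>c::int. \<exists>J. finite J \<and> (\<Sum>j\<in>J. t ^ j) = of_int c" and "t \<noteq> -1"
  shows "t < -1"
proof -
  have "t < 0"
  proof (rule ccontr)
    assume "\<not> t < 0"
    moreover obtain J where "(\<Sum>j\<in>J. t ^ j) = -1"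
      using all by (metis of_int_minus of_int_1)
    ultimately show False
      using sum_nonneg[of J "\<lambda>j. t ^ j"] by simp
  qed
  moreover have "\<bar>t\<bar> \<ge> 1"
  proof (rule ccontr)
    assume "\<not> \<bar>t\<bar> \<ge> 1"
    then have "\<bar>t\<bar> < 1"
      by simp
    obtain J where "finite J" and J: "(\<Sum>j\<in>J. t ^ j) = of_int (\<lceil>1 / (1 - \<bar>t\<bar>)\<rceil> + 1)"
      using all by blast
    have "(\<Sum>j\<in>J. t ^ j) \<le> (\<Sum>j\<in>J. \<bar>t\<bar> ^ j)"
      by (intro sum_mono) (metis abs_ge_self power_abs)
    also have "\<dots> \<le> (\<Sum>n. \<bar>t\<bar> ^ n)"
      using \<open>\<bar>t\<bar> < 1\<close> \<open>finite J\<close> by (intro sum_le_suminf summable_geometric) auto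
    also have "\<dots> = 1 / (1 - \<bar>t\<bar>)"
      using \<open>\<bar>t\<bar> < 1\<close> by (intro suminf_geometric) auto
    finally show False
      using J by linarith
  qed
  ultimately show ?thesis
    using \<open>t \<noteq> -1\<close> by linarith
qed

lemma int_square_neq_8: "(m::int)\<^sup>2 \<noteq> 8"
proof
  assume "m\<^sup>2 = 8"
  then have "\<bar>m\<bar> < 3"
    using power2_less_imp_less[of "\<bar>m\<bar>" 3] by simp
  then have "m \<in> {-2, -1, 0, 1, 2}"
    by auto
  then show False
    using \<open>m\<^sup>2 = 8\<close> by auto
qed

lemma abs_mult_neq_2_below_minus_one:
  fixes x x' :: real
  assumes "x < -1" and "x' < -1" and "x + x' \<in> \<int>"
  shows "\<bar>x * x'\<bar> \<noteq> 2"
proof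
  assume "\<bar>x * x'\<bar> = 2"
  moreover have "1 < x * x'"
    using assms(1,2) mult_strict_mono[of 1 "- x" 1 "- x'"] by simp
  ultimately have "x * x' = 2"
    by simp
  obtain m where m: "x + x' = of_int m"
    using assms(3) by (elim Ints_cases)
  have "0 < (x + 1) * (x' + 1)"
    using assms(1,2) by (simp add: mult_neg_neg)
  then have "-3 < real_of_int m" and "real_of_int m < -2"
    using \<open>x * x' = 2\<close> assms(1,2) m by (simp_all add: algebra_simps)
  then have "-3 < m" and "m < -2"
    by simp_all
  then show False
    by simp
qed

lemma real_quadratic_conjugate_lt_minus_one:
  assumes sf: "squarefree d" and "d \<noteq> 1" and "d > 0" and "k \<noteq> 0"
    and S: "S_generator (quad_ints d) (quad_half d m k)" and k': "k' = k \<or> k' = - k"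
  shows "(real_of_int m + real_of_int k' * sqrt (real_of_int d)) / 2 < -1"
proof -
  define x where "x = (real_of_int m + real_of_int k' * sqrt (real_of_int d)) / 2"
  have "csqrt (of_int d) = complex_of_real (sqrt (real_of_int d))"
    using \<open>d > 0\<close> by (subst csqrt_of_real_nonneg) auto
  then have x: "quad_half d m k' = complex_of_real x"
    by (simp add: quad_half_def x_def)
  have "\<forall>c::int. \<exists>J. finite J \<and> (\<Sum>j\<in>J. x ^ j) = of_int c"
  proof
    fix c :: int
    obtain J where "finite J" and J: "(\<Sum>j\<in>J. quad_half d m k ^ j) = of_int c"
      using S quad_ints.of_int_mem[of c d] unfolding S_generator_def by metis
    then have "(\<Sum>j\<in>J. quad_half d m k' ^ j) = of_int c"
      using sum_powers_quad_half_conj[OF sf \<open>d \<noteq> 1\<close> J] k' by auto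
    then have "complex_of_real (\<Sum>j\<in>J. x ^ j) = of_real (of_int c)"
      by (simp add: x flip: of_real_power of_real_sum)
    then show "\<exists>J. finite J \<and> (\<Sum>j\<in>J. x ^ j) = of_int c"
      using \<open>finite J\<close> by (simp only: of_real_eq_iff) blast
  qed
  moreover have "x \<noteq> -1"
  proof
    assume "x = -1"
    moreover have "quad_half d (-2) 0 = -1"
      by (simp add: quad_half_def)
    ultimately have "quad_half d m k' = quad_half d (-2) 0"
      by (simp add: x)
    then show False
      using quad_half_eq_iff[OF sf \<open>d \<noteq> 1\<close>] \<open>k \<noteq> 0\<close> k' by auto
  qed
  ultimately show ?thesis
    using real_sum_powers_base unfolding x_def by blast
qed

lemma no_S_generator_real_quadratic:
  assumes sf: "squarefree d" and "d \<noteq> 1" and "d > 0"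
  shows "\<not> S_generator (quad_ints d) X"
proof
  assume S: "S_generator (quad_ints d) X"
  then obtain m k where X: "X = quad_half d m k"
    unfolding S_generator_def by (auto elim: quad_intsE)
  have norm: "m\<^sup>2 - d * k\<^sup>2 = 8 \<or> m\<^sup>2 - d * k\<^sup>2 = -8"
    using S_generator_quad_ints_norm[OF sf \<open>d \<noteq> 1\<close>] S X by blast
  have "k \<noteq> 0"
  proof
    assume "k = 0"
    then have "m\<^sup>2 = 8 \<or> m\<^sup>2 = -8"
      using norm by simp
    then show False
      using int_square_neq_8[of m] by (smt (verit) zero_le_power2)
  qed
  define s where "s = sqrt (real_of_int d)"
  define x x' where "x = (real_of_int m + real_of_int k * s) / 2"
    and "x' = (real_of_int m - real_of_int k * s) / 2"
  have "x < -1" and "x' < -1"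
    using real_quadratic_conjugate_lt_minus_one[OF sf \<open>d \<noteq> 1\<close> \<open>d > 0\<close> \<open>k \<noteq> 0\<close> S[unfolded X], of k]
      real_quadratic_conjugate_lt_minus_one[OF sf \<open>d \<noteq> 1\<close> \<open>d > 0\<close> \<open>k \<noteq> 0\<close> S[unfolded X], of "- k"]
    by (simp_all add: x_def x'_def s_def)
  moreover have "x + x' \<in> \<int>"
    by (simp add: x_def x'_def field_simps)
  moreover have "x * x' = real_of_int (m\<^sup>2 - d * k\<^sup>2) / 4"
    using \<open>d > 0\<close> by (simp add: x_def x'_def s_def power2_eq_square field_simps)
  then have "\<bar>x * x'\<bar> = 2"
    using norm by (elim disjE) simp_all
  ultimately show False
    using abs_mult_neq_2_below_minus_one by blast
qed

lemma imaginary_quad_norm_ge: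
  fixes d m k :: int
  assumes "d < 0"
  shows "m\<^sup>2 \<le> m\<^sup>2 - d * k\<^sup>2" and "k\<^sup>2 \<le> m\<^sup>2 - d * k\<^sup>2"
proof -
  have "k\<^sup>2 \<le> - d * k\<^sup>2"
    using assms mult_right_mono[of 1 "- d" "k\<^sup>2"] by simp
  then show "m\<^sup>2 \<le> m\<^sup>2 - d * k\<^sup>2" and "k\<^sup>2 \<le> m\<^sup>2 - d * k\<^sup>2"
    using zero_le_power2[of m] zero_le_power2[of k] by linarith+
qed

lemma imaginary_norm_eight:
  fixes d m k :: int
  assumes "d < 0" and "squarefree d" and "m\<^sup>2 - d * k\<^sup>2 = 8"
  shows "d \<in> {-1, -2, -7}"
proof -
  have "k \<noteq> 0"
    using assms(3) int_square_neq_8[of m] by auto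
  then have "1 \<le> k\<^sup>2"
    by (simp add: power2_eq_square) (smt (verit) mult_le_cancel_left1 zero_less_mult_iff)
  then have "- d \<le> - d * k\<^sup>2"
    using assms(1) mult_left_mono[of 1 "k\<^sup>2" "- d"] by simp
  moreover have "m\<^sup>2 \<le> 8" "k\<^sup>2 \<le> 8"
    using imaginary_quad_norm_ge[OF assms(1), where m = m and k = k] assms(3) by simp_all
  ultimately have "- 8 \<le> d" "m\<^sup>2 < 9" "k\<^sup>2 < 9"
    using assms(3) zero_le_power2[of m] by linarith+
  then have "d \<in> {-8..-1}" "\<bar>m\<bar> < 3" "\<bar>k\<bar> < 3"
    using assms(1) power2_less_imp_less[of "\<bar>m\<bar>" 3] power2_less_imp_less[of "\<bar>k\<bar>" 3] by simp_all
  then have "d \<in> {-8, -7, -6, -5, -4, -3, -2, -1}" "m \<in> {-2, -1, 0, 1, 2}" "k \<in> {-2, -1, 0, 1, 2}"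
    by auto
  then show ?thesis
    using assms(3) squarefree_imp_not_4_dvd[OF assms(2)] by auto
qed

lemma S_generator_quad_ints_imp:
  assumes "squarefree d" and "d \<noteq> 1" and "S_generator (quad_ints d) X"
  shows "d \<in> {-1, -2, -7}"
proof -
  have "d \<noteq> 0"
    using assms(1) by auto
  moreover have "\<not> d > 0"
    using no_S_generator_real_quadratic[OF assms(1,2)] assms(3) by blast
  ultimately have "d < 0"
    by simp
  obtain m k where "X = quad_half d m k"
    using assms(3) unfolding S_generator_def by (auto elim: quad_intsE)
  then have "m\<^sup>2 - d * k\<^sup>2 = 8 \<or> m\<^sup>2 - d * k\<^sup>2 = -8"
    using S_generator_quad_ints_norm assms by blast
  moreover have "0 \<le> m\<^sup>2 - d * k\<^sup>2"
    using imaginary_quad_norm_ge[OF \<open>d < 0\<close>, where m = m and k = k] zero_le_power2[of m] by linarith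
  ultimately show ?thesis
    using imaginary_norm_eight[OF \<open>d < 0\<close> assms(1)] by auto
qed

section \<open>\<open>\<bbbS>\<close>-generators by digit expansion\<close>

lemma cmod_quad_half_sq:
  assumes "d < 0"
  shows "cmod (quad_half d m k) ^ 2 = real_of_int (m\<^sup>2 - d * k\<^sup>2) / 4"
proof -
  have "csqrt (of_int d) = \<i> * complex_of_real (sqrt (- real_of_int d))"
    using assms by (subst csqrt_of_real_nonpos) auto
  then have "Re (quad_half d m k) = real_of_int m / 2"
    and "Im (quad_half d m k) = real_of_int k * sqrt (- real_of_int d) / 2"
    by (simp_all add: quad_half_def)
  then have "cmod (quad_half d m k) ^ 2 = (real_of_int m / 2)\<^sup>2 + (real_of_int k * sqrt (- real_of_int d) / 2)\<^sup>2"
    by (simp only: cmod_power2)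
  also have "\<dots> = real_of_int (m\<^sup>2 - d * k\<^sup>2) / 4"
    using assms by (simp add: field_simps)
  finally show ?thesis .
qed

definition is_digit_step :: "int \<Rightarrow> complex \<Rightarrow> (int \<Rightarrow> int \<Rightarrow> int \<times> int \<times> int) \<Rightarrow> bool" where
  "is_digit_step d X f \<longleftrightarrow> (\<forall>m k e m' k'. 4 dvd m\<^sup>2 - d * k\<^sup>2 \<longrightarrow> f m k = (e, m', k') \<longrightarrow>
     e \<in> {0, 1} \<and> 4 dvd m'\<^sup>2 - d * k'\<^sup>2 \<and> quad_half d m k = of_int e + X * quad_half d m' k')"

text \<open>In a digit chain the quotient of each entry is \<open>0\<close> or occurs further down the list, so
  expansions can be built from the end of the list backwards.\<close>

fun digit_chain :: "int \<Rightarrow> (int \<Rightarrow> int \<Rightarrow> int \<times> int \<times> int) \<Rightarrow> (int \<times> int) list \<Rightarrow> bool" where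
  "digit_chain d f [] \<longleftrightarrow> True"
| "digit_chain d f ((m, k) # L) \<longleftrightarrow> 4 dvd m\<^sup>2 - d * k\<^sup>2 \<and>
     (case f m k of (_, m', k') \<Rightarrow> (m', k') \<in> set ((0, 0) # L)) \<and> digit_chain d f L"

text \<open>For \<open>d < 0\<close> the elements with \<open>|y|\<^sup>2 < 6\<close>, i.e. \<open>m\<^sup>2 - d k\<^sup>2 < 24\<close>, have \<open>|m|, |k| \<le> 4\<close>.\<close>

definition covers_small :: "int \<Rightarrow> (int \<times> int) list \<Rightarrow> bool" where
  "covers_small d L \<longleftrightarrow> (\<forall>m\<in>set [-4..4]. \<forall>k\<in>set [-4..4].
     4 dvd m\<^sup>2 - d * k\<^sup>2 \<and> m\<^sup>2 - d * k\<^sup>2 < 24 \<longrightarrow> (m, k) \<in> set ((0, 0) # L))"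

lemma is_digit_stepD:
  assumes "is_digit_step d X f" and "4 dvd m\<^sup>2 - d * k\<^sup>2" and "f m k = (e, m', k')"
  shows "e \<in> {0, 1}" "4 dvd m'\<^sup>2 - d * k'\<^sup>2" "quad_half d m k = of_int e + X * quad_half d m' k'"
  using assms unfolding is_digit_step_def by blast+

lemma digit_chain_expansion:
  assumes f: "is_digit_step d X f" and "digit_chain d f L" and "(m, k) \<in> set ((0, 0) # L)"
  shows "\<exists>J. finite J \<and> quad_half d m k = (\<Sum>j\<in>J. X ^ j)"
  using assms(2,3)
proof (induction L arbitrary: m k)
  case Nil
  then show ?case
    by (intro exI[of _ "{}"]) (simp add: quad_half_def)
next
  case (Cons a L)
  obtain m0 k0 where a: "a = (m0, k0)"
    by fastforce
  obtain e m' k' where step: "f m0 k0 = (e, m', k')"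
    by (metis prod_cases3)
  have "\<exists>J. finite J \<and> quad_half d m' k' = (\<Sum>j\<in>J. X ^ j)"
    using Cons.prems(1) Cons.IH step by (simp add: a)
  then obtain J where "finite J" and J: "quad_half d m' k' = (\<Sum>j\<in>J. X ^ j)"
    by blast
  have "of_int e \<in> {0, 1 :: complex}"
    using is_digit_stepD(1)[OF f _ step] Cons.prems(1) by (auto simp: a)
  then have "\<exists>J. finite J \<and> quad_half d m0 k0 = (\<Sum>j\<in>J. X ^ j)"
    using sum_powers_add_digit[OF _ \<open>finite J\<close>, of "of_int e" X]
      is_digit_stepD(3)[OF f _ step] Cons.prems(1) J by (auto simp: a)
  then show ?case
    using Cons by (auto simp: a)
qed

lemma cmod_sq_quad_ints_Nats:
  assumes "d < 0" and "y \<in> quad_ints d"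
  shows "cmod y ^ 2 \<in> \<nat>"
proof -
  obtain m k n where "y = quad_half d m k" and n: "m\<^sup>2 - d * k\<^sup>2 = 4 * n"
    using \<open>y \<in> quad_ints d\<close> by (auto elim!: quad_intsE)
  moreover have "0 \<le> m\<^sup>2 - d * k\<^sup>2"
    using imaginary_quad_norm_ge[OF \<open>d < 0\<close>, where m = m and k = k] zero_le_power2[of m] by linarith
  ultimately have "cmod y ^ 2 = of_nat (nat n)"
    by (simp add: cmod_quad_half_sq[OF \<open>d < 0\<close>])
  then show ?thesis
    by simp
qed

lemma is_digit_step_digits:
  assumes f: "is_digit_step d X f" and "y \<in> quad_ints d"
  shows "\<exists>e\<in>{0, 1}. \<exists>y'\<in>quad_ints d. y = e + X * y'"
proof -
  obtain m k where y: "y = quad_half d m k" and mk: "4 dvd m\<^sup>2 - d * k\<^sup>2"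
    using \<open>y \<in> quad_ints d\<close> by (elim quad_intsE)
  obtain e m' k' where step: "f m k = (e, m', k')"
    by (metis prod_cases3)
  show ?thesis
    using is_digit_stepD[OF f mk step] y by force
qed

lemma S_generator_imaginary_quad_ints:
  assumes "d < 0" and norm: "p\<^sup>2 - d * q\<^sup>2 = 8"
    and f: "is_digit_step d (quad_half d p q) f" and "digit_chain d f L" and "covers_small d L"
  shows "S_generator (quad_ints d) (quad_half d p q)"
proof (rule quad_ints.S_generator_by_descent)
  show "quad_half d p q \<in> quad_ints d"
    using norm by (intro quad_half_in_quad_ints) simp
  show "cmod (quad_half d p q) ^ 2 = 2"
    using norm by (simp add: cmod_quad_half_sq[OF \<open>d < 0\<close>])
  show "cmod y ^ 2 \<in> \<nat>" if "y \<in> quad_ints d" for y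
    using cmod_sq_quad_ints_Nats[OF \<open>d < 0\<close> that] .
  show "\<exists>e\<in>{0, 1}. \<exists>y'\<in>quad_ints d. y = e + quad_half d p q * y'" if "y \<in> quad_ints d" for y
    using is_digit_step_digits[OF f that] .
  show "\<exists>J. finite J \<and> y = (\<Sum>j\<in>J. quad_half d p q ^ j)"
    if "y \<in> quad_ints d" and "cmod y ^ 2 < 6" for y
  proof -
    obtain m k where y: "y = quad_half d m k" and mk: "4 dvd m\<^sup>2 - d * k\<^sup>2"
      using \<open>y \<in> quad_ints d\<close> by (elim quad_intsE)
    have "m\<^sup>2 - d * k\<^sup>2 < 24"
      using \<open>cmod y ^ 2 < 6\<close> by (simp add: y cmod_quad_half_sq[OF \<open>d < 0\<close>] del: of_int_diff)
    then have "m\<^sup>2 < 25" "k\<^sup>2 < 25"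
      using imaginary_quad_norm_ge[OF \<open>d < 0\<close>, where m = m and k = k] by linarith+
    then have "\<bar>m\<bar> < 5" "\<bar>k\<bar> < 5"
      using power2_less_imp_less[of "\<bar>m\<bar>" 5] power2_less_imp_less[of "\<bar>k\<bar>" 5] by simp_all
    then have "m \<in> set [-4..4]" "k \<in> set [-4..4]"
      by auto
    then have "(m, k) \<in> set ((0, 0) # L)"
      using \<open>covers_small d L\<close> mk \<open>m\<^sup>2 - d * k\<^sup>2 < 24\<close> unfolding covers_small_def by blast
    then show ?thesis
      using digit_chain_expansion[OF f \<open>digit_chain d f L\<close>] y by blast
  qed
qed

lemma quad_half_eq_digit:
  assumes "2 * m = 4 * e + p * m' + d * q * k'" and "2 * k = p * k' + q * m'"
  shows "quad_half d m k = of_int e + quad_half d p q * quad_half d m' k'"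
proof -
  have "quad_half d p q * quad_half d m' k'
      = (of_int (p * m' + d * q * k') + of_int (p * k' + q * m') * csqrt (of_int d)) / 4"
    by (simp add: quad_half_mult mult_ac)
  also have "\<dots> = (of_int (2 * m - 4 * e) + of_int (2 * k) * csqrt (of_int d)) / 4"
    using assms by (simp add: algebra_simps)
  also have "\<dots> = quad_half d m k - of_int e"
    by (simp add: quad_half_def field_simps)
  finally show ?thesis
    by simp
qed

text \<open>With \<open>(m, k) = (2 a, 2 b)\<close>: \<open>(a + b i - e) / (-1 + i) = ((b - a + e) + (e - a - b) i) / 2\<close>.\<close>

definition digit_m1 :: "int \<Rightarrow> int \<Rightarrow> int \<times> int \<times> int" where
  "digit_m1 m k = (let a = m div 2; b = k div 2; e = (a + b) mod 2 in (e, b + e - a, e - a - b))"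

lemma is_digit_step_m1: "is_digit_step (-1) (quad_half (-1) (-2) 2) digit_m1"
  unfolding is_digit_step_def
proof (intro allI impI conjI)
  fix m k e m' k' :: int
  assume mk: "4 dvd m\<^sup>2 - (-1) * k\<^sup>2" and step: "digit_m1 m k = (e, m', k')"
  have "even m \<longleftrightarrow> even k"
    using quad_ints_parity[OF mk] by simp
  moreover have "\<not> (odd m \<and> odd k)"
  proof
    assume "odd m \<and> odd k"
    then obtain a b where "m = 2 * a + 1" "k = 2 * b + 1"
      by (meson oddE)
    then have "m\<^sup>2 - (-1) * k\<^sup>2 = 4 * (a\<^sup>2 + a + b\<^sup>2 + b) + 2"
      by (simp add: power2_eq_square algebra_simps)
    then show False
      using mk by presburger
  qed
  ultimately obtain a b where a: "m = 2 * a" and b: "k = 2 * b"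
    by (meson evenE)
  have e: "e = (a + b) mod 2" and m': "m' = b + e - a" and k': "k' = e - a - b"
    using step by (simp_all add: digit_m1_def a b Let_def)
  show "e \<in> {0, 1}"
    using e by auto
  have "even m'" "even k'"
    using e m' k' by presburger+
  then show "4 dvd m'\<^sup>2 - (-1) * k'\<^sup>2"
    by (auto elim!: evenE simp: power2_eq_square algebra_simps)
  show "quad_half (-1) m k = of_int e + quad_half (-1) (-2) 2 * quad_half (-1) m' k'"
    by (rule quad_half_eq_digit) (simp_all add: a b m' k' algebra_simps)
qed

text \<open>With \<open>(m, k) = (2 a, 2 b)\<close>: \<open>(a + b \<surd>-2 - e) / \<surd>-2 = b + ((e - a) / 2) \<surd>-2\<close>.\<close>

definition digit_m2 :: "int \<Rightarrow> int \<Rightarrow> int \<times> int \<times> int" where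
  "digit_m2 m k = (let a = m div 2; e = a mod 2 in (e, k, e - a))"

lemma is_digit_step_m2: "is_digit_step (-2) (quad_half (-2) 0 2) digit_m2"
  unfolding is_digit_step_def
proof (intro allI impI conjI)
  fix m k e m' k' :: int
  assume mk: "4 dvd m\<^sup>2 - (-2) * k\<^sup>2" and step: "digit_m2 m k = (e, m', k')"
  have "even m"
    using quad_ints_parity[OF mk] by simp
  then obtain a where a: "m = 2 * a"
    by (elim evenE)
  obtain t where "m\<^sup>2 - (-2) * k\<^sup>2 = 4 * t"
    using mk by (elim dvdE)
  then have "k\<^sup>2 = 2 * (t - a\<^sup>2)"
    by (simp add: a power2_eq_square algebra_simps)
  then have "even k"
    by (metis dvd_triv_left even_power)
  then obtain b where b: "k = 2 * b"
    by (elim evenE)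
  have e: "e = a mod 2" and m': "m' = k" and k': "k' = e - a"
    using step by (simp_all add: digit_m2_def a Let_def)
  show "e \<in> {0, 1}"
    using e by auto
  have "even k'"
    using e k' by presburger
  then show "4 dvd m'\<^sup>2 - (-2) * k'\<^sup>2"
    by (auto elim!: evenE simp: m' b power2_eq_square algebra_simps)
  show "quad_half (-2) m k = of_int e + quad_half (-2) 0 2 * quad_half (-2) m' k'"
    by (rule quad_half_eq_digit) (simp_all add: a b m' k' algebra_simps)
qed

text \<open>Writing \<open>\<omega> = (1 + \<surd>-7) / 2\<close>, the quotient \<open>(y - e) / \<omega>\<close> has \<open>\<surd>-7\<close>-coordinate
  \<open>(k - m + 2 e) / 4\<close>, which is integral for exactly one digit \<open>e\<close>.\<close>

definition digit_m7 :: "int \<Rightarrow> int \<Rightarrow> int \<times> int \<times> int" where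
  "digit_m7 m k = (let e = (if (k - m) mod 4 = 0 then 0 else 1); k' = (k - m + 2 * e) div 4
     in (e, 2 * k - k', k'))"

lemma quad_ints_m7_iff: "4 dvd m\<^sup>2 - (-7) * k\<^sup>2 \<longleftrightarrow> (even m \<longleftrightarrow> even (k::int))"
proof
  show "even m \<longleftrightarrow> even k" if mk: "4 dvd m\<^sup>2 - (-7) * k\<^sup>2"
    using quad_ints_parity[OF mk] by simp
  show "4 dvd m\<^sup>2 - (-7) * k\<^sup>2" if parity: "even m \<longleftrightarrow> even k"
  proof (cases "even m")
    case True
    then obtain a b where "m = 2 * a" "k = 2 * b"
      using parity by (meson evenE)
    then have "m\<^sup>2 - (-7) * k\<^sup>2 = 4 * (a\<^sup>2 + 7 * b\<^sup>2)"
      by (simp add: power2_eq_square algebra_simps)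
    then show ?thesis
      by simp
  next
    case False
    then obtain a b where "m = 2 * a + 1" "k = 2 * b + 1"
      using parity by (meson oddE)
    then have "m\<^sup>2 - (-7) * k\<^sup>2 = 4 * (a\<^sup>2 + a + 7 * b\<^sup>2 + 7 * b + 2)"
      by (simp add: power2_eq_square algebra_simps)
    then show ?thesis
      by simp
  qed
qed

lemma is_digit_step_m7: "is_digit_step (-7) (quad_half (-7) 1 1) digit_m7"
  unfolding is_digit_step_def
proof (intro allI impI conjI)
  fix m k e m' k' :: int
  assume mk: "4 dvd m\<^sup>2 - (-7) * k\<^sup>2" and step: "digit_m7 m k = (e, m', k')"
  have e: "e = (if (k - m) mod 4 = 0 then 0 else 1)" and k': "k' = (k - m + 2 * e) div 4"
    and m': "m' = 2 * k - k'"
    using step by (auto simp: digit_m7_def Let_def)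
  show "e \<in> {0, 1}"
    using e by auto
  have "even (k - m)"
    using quad_ints_m7_iff[THEN iffD1, OF mk] by simp
  then have four_k': "k - m + 2 * e = 4 * k'"
    unfolding k' e by presburger
  have "even m' \<longleftrightarrow> even k'"
    by (simp add: m')
  then show "4 dvd m'\<^sup>2 - (-7) * k'\<^sup>2"
    by (rule quad_ints_m7_iff[THEN iffD2])
  show "quad_half (-7) m k = of_int e + quad_half (-7) 1 1 * quad_half (-7) m' k'"
    by (rule quad_half_eq_digit) (use four_k' in \<open>simp_all add: m' algebra_simps\<close>)
qed

lemma S_generator_m1: "S_generator (quad_ints (-1)) (-1 + \<i>)"
proof -
  have "S_generator (quad_ints (-1)) (quad_half (-1) (-2) 2)"
  proof (rule S_generator_imaginary_quad_ints[OF _ _ is_digit_step_m1])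
    show "digit_chain (-1) digit_m1 [(-4, -2), (-2, -4), (0, 4), (2, 4), (2, -2), (4, -2), (-4, 0),
      (-4, 2), (-2, 0), (-2, 4), (2, 2), (4, 0), (4, 2), (-2, -2), (0, -4), (0, -2), (2, -4), (-2, 2),
      (0, 2), (2, 0)]"
      by code_simp
    show "covers_small (-1) [(-4, -2), (-2, -4), (0, 4), (2, 4), (2, -2), (4, -2), (-4, 0),
      (-4, 2), (-2, 0), (-2, 4), (2, 2), (4, 0), (4, 2), (-2, -2), (0, -4), (0, -2), (2, -4), (-2, 2),
      (0, 2), (2, 0)]"
      by code_simp
  qed simp_all
  moreover have "csqrt (-1) = \<i>"
    by (subst csqrt_of_real_nonpos) auto
  then have "quad_half (-1) (-2) 2 = -1 + \<i>"
    by (simp add: quad_half_def field_simps)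
  ultimately show ?thesis
    by simp
qed

lemma S_generator_m2: "S_generator (quad_ints (-2)) (csqrt (-2))"
proof -
  have "S_generator (quad_ints (-2)) (quad_half (-2) 0 2)"
  proof (rule S_generator_imaginary_quad_ints[OF _ _ is_digit_step_m2])
    show "digit_chain (-2) digit_m2 [(4, 0), (-2, -2), (0, -2), (2, -2), (-4, 0), (-2, 0), (-2, 2),
      (0, 2), (2, 2), (2, 0)]"
      by code_simp
    show "covers_small (-2) [(4, 0), (-2, -2), (0, -2), (2, -2), (-4, 0), (-2, 0), (-2, 2),
      (0, 2), (2, 2), (2, 0)]"
      by code_simp
  qed simp_all
  then show ?thesis
    by (simp add: quad_half_def)
qed

lemma S_generator_m7: "S_generator (quad_ints (-7)) ((1 + csqrt (-7)) / 2)"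
proof -
  have "S_generator (quad_ints (-7)) (quad_half (-7) 1 1)"
  proof (rule S_generator_imaginary_quad_ints[OF _ _ is_digit_step_m7])
    show "digit_chain (-7) digit_m7 [(3, -1), (4, 0), (-1, -1), (1, -1), (-4, 0), (-3, -1), (-2, 0),
      (-3, 1), (-1, 1), (1, 1), (3, 1), (2, 0)]"
      by code_simp
    show "covers_small (-7) [(3, -1), (4, 0), (-1, -1), (1, -1), (-4, 0), (-3, -1), (-2, 0),
      (-3, 1), (-1, 1), (1, 1), (3, 1), (2, 0)]"
      by code_simp
  qed simp_all
  then show ?thesis
    by (simp add: quad_half_def)
qed

theorem proposition6p1:
  fixes d :: int
  assumes "squarefree d" and "d \<noteq> 1"
  shows "((\<exists>X. S_generator (ring_of_integers (quad_field d)) X) \<longleftrightarrow> d \<in> {-1, -2, -7})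
    \<and> S_generator (ring_of_integers (quad_field (-1))) (-1 + \<i>)
    \<and> S_generator (ring_of_integers (quad_field (-2))) (csqrt (-2))
    \<and> S_generator (ring_of_integers (quad_field (-7))) ((1 + csqrt (-7)) / 2)"
proof -
  have "squarefree (-1 :: int)" "squarefree (-2 :: int)" "squarefree (-7 :: int)"
    by (simp_all add: squarefree_prime)
  then have "S_generator (ring_of_integers (quad_field (-1))) (-1 + \<i>)"
    "S_generator (ring_of_integers (quad_field (-2))) (csqrt (-2))"
    "S_generator (ring_of_integers (quad_field (-7))) ((1 + csqrt (-7)) / 2)"
    using S_generator_m1 S_generator_m2 S_generator_m7 by (simp_all only: ring_of_integers_quad_field)
  moreover have "(\<exists>X. S_generator (ring_of_integers (quad_field d)) X) \<longleftrightarrow> d \<in> {-1, -2, -7}"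
    using S_generator_m1 S_generator_m2 S_generator_m7 S_generator_quad_ints_imp[OF assms]
    by (auto simp: ring_of_integers_quad_field[OF assms])
  ultimately show ?thesis
    by blast
qed

end
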